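(* Let $k\ge 1$ and let $H$ be a connected $k$-regular $k$-edge-colorable graph with no loops or semi-edges (multiple ordinary edges allowed). Then there exists a connected simple $k$-regular $k$-edge-colorable graph $G$ and a vertex $u\in V(G)$ such that for every vertex $x\in V(H)$ and every bijection $\sigma:E_G(u)\to E_H(x)$ there exists a covering projection from $G$ to $H$ that maps $u$ to $x$ and agrees with $\sigma$ on $E_G(u)$.
   Context: $E_G(u)$ denotes the set of edges of $G$ incident with $u$. A graph is simple if it has no loops, no semi-edges and no multiple edges. A covering projection between graphs without loops and semi-edges is a map sending vertices to vertices and edges to edges, preserving incidences, such that for every edge $xy$ of the target its preimage is a perfect matching between the preimages of $x$ and $y$ (equivalently, it restricts to a bijection from $E_G(v)$ onto $E_H(f(v))$ for every vertex $v$). *)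

theory Defs
  imports Main
begin

text \<open>Loops and semi-edges
are excluded by requiring every edge to have exactly two distinct ends;
parallel edges are allowed.\<close>

definition loopless_multigraph :: "'v set \<Rightarrow> 'e set \<Rightarrow> ('e \<Rightarrow> 'v set) \<Rightarrow> bool" where
  "loopless_multigraph V E ends \<longleftrightarrow> finite V \<and> finite E \<and>
     (\<forall>e\<in>E. ends e \<subseteq> V \<and> card (ends e) = 2)"

definition simple_graph :: "'v set \<Rightarrow> 'e set \<Rightarrow> ('e \<Rightarrow> 'v set) \<Rightarrow> bool" where
  "simple_graph V E ends \<longleftrightarrow> loopless_multigraph V E ends \<and> inj_on ends E"

definition incident_edges :: "'e set \<Rightarrow> ('e \<Rightarrow> 'v set) \<Rightarrow> 'v \<Rightarrow> 'e set" where
  "incident_edges E ends u = {e \<in> E. u \<in> ends e}"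

definition regular :: "nat \<Rightarrow> 'v set \<Rightarrow> 'e set \<Rightarrow> ('e \<Rightarrow> 'v set) \<Rightarrow> bool" where
  "regular k V E ends \<longleftrightarrow> (\<forall>v\<in>V. card (incident_edges E ends v) = k)"

definition edge_colorable :: "nat \<Rightarrow> 'v set \<Rightarrow> 'e set \<Rightarrow> ('e \<Rightarrow> 'v set) \<Rightarrow> bool" where
  "edge_colorable k V E ends \<longleftrightarrow> (\<exists>c::'e \<Rightarrow> nat. (\<forall>e\<in>E. c e < k) \<and>
     (\<forall>v\<in>V. inj_on c (incident_edges E ends v)))"

definition adj_rel :: "'e set \<Rightarrow> ('e \<Rightarrow> 'v set) \<Rightarrow> ('v \<times> 'v) set" where
  "adj_rel E ends = {(x, y). \<exists>e\<in>E. ends e = {x, y}}"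

definition connected_graph :: "'v set \<Rightarrow> 'e set \<Rightarrow> ('e \<Rightarrow> 'v set) \<Rightarrow> bool" where
  "connected_graph V E ends \<longleftrightarrow> V \<noteq> {} \<and> (\<forall>x\<in>V. \<forall>y\<in>V. (x, y) \<in> (adj_rel E ends)\<^sup>*)"

definition covering_projection ::
  "'v set \<Rightarrow> 'e set \<Rightarrow> ('e \<Rightarrow> 'v set) \<Rightarrow> 'w set \<Rightarrow> 'f set \<Rightarrow> ('f \<Rightarrow> 'w set)
   \<Rightarrow> ('v \<Rightarrow> 'w) \<Rightarrow> ('e \<Rightarrow> 'f) \<Rightarrow> bool" where
  "covering_projection VG EG endsG VH EH endsH fV fE \<longleftrightarrow>
     (\<forall>v\<in>VG. fV v \<in> VH) \<and> (\<forall>e\<in>EG. fE e \<in> EH) \<and>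
     (\<forall>e\<in>EG. endsH (fE e) = fV ` endsG e) \<and>
     (\<forall>v\<in>VG. bij_betw fE (incident_edges EG endsG v) (incident_edges EH endsH (fV v)))"

end

theory Submission
  imports Defs "HOL-Combinatorics.Permutations" "HOL-Library.FuncSet"
begin

text \<open>
  Fix a proper edge colouring of H with colours \<open>0..<k\<close>.  Since H is k-regular, every vertex
  has exactly one edge of each colour, so colour j defines a fixed-point-free involution
  \<open>neighbour j\<close> of V(H).  A colour permutation \<rho> and a vertex x determine a covering of H in
  which the base edge of colour i goes to the edge of colour \<open>\<rho> i\<close> at x, and every bijection
  \<sigma> of the statement arises this way.  G runs all these coverings in parallel: it is the
  component of a base state in the graph whose colour-i edges join s to \<open>move i s\<close>, where a
  state records, for every pair (\<rho>, x), a current vertex of H (initially x), and \<open>move i\<close>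
  replaces it by its \<open>neighbour (\<rho> i)\<close>.  Reading off the (\<rho>, x) coordinate is then the
  required covering projection.  A state also carries a set of colours toggled by \<open>move i\<close>,
  which makes the \<open>move i\<close> fixed-point-free and pairwise distinct, so G is simple.
\<close>

definition local_bijections_lift ::
  "'a set \<Rightarrow> 'b set \<Rightarrow> ('b \<Rightarrow> 'a set) \<Rightarrow> 'v set \<Rightarrow> 'e set \<Rightarrow> ('e \<Rightarrow> 'v set) \<Rightarrow> 'a \<Rightarrow> bool" where
  "local_bijections_lift VG EG endsG VH EH endsH u \<longleftrightarrow>
     (\<forall>x\<in>VH. \<forall>\<sigma>. bij_betw \<sigma> (incident_edges EG endsG u) (incident_edges EH endsH x) \<longrightarrow>
        (\<exists>fV fE. covering_projection VG EG endsG VH EH endsH fV fE \<and> fV u = x \<and>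
           (\<forall>e\<in>incident_edges EG endsG u. fE e = \<sigma> e)))"

lemma incident_edges_subset: "incident_edges E ends v \<subseteq> E"
  by (auto simp: incident_edges_def)

lemma loopless_multigraph_ends_subset: "loopless_multigraph V E ends \<Longrightarrow> e \<in> E \<Longrightarrow> ends e \<subseteq> V"
  by (simp add: loopless_multigraph_def)

lemma sym_adj_rel: "sym (adj_rel E ends)"
  by (auto simp: adj_rel_def sym_def insert_commute)

lemma connected_graphI:
  assumes "u \<in> V" and "\<And>x. x \<in> V \<Longrightarrow> (u, x) \<in> (adj_rel E ends)\<^sup>*"
  shows "connected_graph V E ends"
  unfolding connected_graph_def
proof (intro conjI ballI)
  fix x y assume "x \<in> V" "y \<in> V"
  then have "(x, u) \<in> (adj_rel E ends)\<^sup>*" "(u, y) \<in> (adj_rel E ends)\<^sup>*"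
    using assms(2) by (auto intro: symD[OF sym_rtrancl[OF sym_adj_rel]])
  then show "(x, y) \<in> (adj_rel E ends)\<^sup>*" by (rule rtrancl_trans)
qed (use assms(1) in blast)

definition relabel_ends :: "('a \<Rightarrow> 'c) \<Rightarrow> ('b \<Rightarrow> 'd) \<Rightarrow> 'b set \<Rightarrow> ('b \<Rightarrow> 'a set) \<Rightarrow> 'd \<Rightarrow> 'c set" where
  "relabel_ends \<alpha> \<beta> E ends e' = \<alpha> ` ends (inv_into E \<beta> e')"

context
  fixes V :: "'a set" and E :: "'b set" and ends :: "'b \<Rightarrow> 'a set"
    and \<alpha> :: "'a \<Rightarrow> 'c" and \<beta> :: "'b \<Rightarrow> 'd"
  assumes loopless: "loopless_multigraph V E ends" and inj_\<alpha>: "inj_on \<alpha> V" and inj_\<beta>: "inj_on \<beta> E"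
begin

private abbreviation "ends' \<equiv> relabel_ends \<alpha> \<beta> E ends"

private lemmas ends_subset = loopless_multigraph_ends_subset[OF loopless]

lemma inv_into_relabel_edge: "e \<in> incident_edges E ends v \<Longrightarrow> inv_into E \<beta> (\<beta> e) = e"
  using inj_\<beta> by (simp add: incident_edges_def)

lemma relabel_ends_image: "e \<in> E \<Longrightarrow> ends' (\<beta> e) = \<alpha> ` ends e"
  using inj_\<beta> by (simp add: relabel_ends_def)

lemma incident_edges_relabel:
  assumes v: "v \<in> V"
  shows "incident_edges (\<beta> ` E) ends' (\<alpha> v) = \<beta> ` incident_edges E ends v"
proof -
  have "\<alpha> v \<in> \<alpha> ` ends e \<longleftrightarrow> v \<in> ends e" if "e \<in> E" for e
    using inj_on_image_mem_iff[OF inj_\<alpha> v ends_subset[OF that]] .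
  then show ?thesis by (auto simp: incident_edges_def relabel_ends_image)
qed

lemma bij_betw_incident_relabel:
  "bij_betw \<beta> (incident_edges E ends v) (\<beta> ` incident_edges E ends v)"
  using inj_on_subset[OF inj_\<beta> incident_edges_subset] by (simp add: bij_betw_def)

lemma simple_graph_relabel:
  assumes "simple_graph V E ends"
  shows "simple_graph (\<alpha> ` V) (\<beta> ` E) ends'"
  unfolding simple_graph_def loopless_multigraph_def
proof (intro conjI ballI)
  show "finite (\<alpha> ` V)" "finite (\<beta> ` E)" using loopless by (auto simp: loopless_multigraph_def)
next
  fix e' assume "e' \<in> \<beta> ` E"
  then obtain e where e: "e \<in> E" "e' = \<beta> e" by auto
  show "ends' e' \<subseteq> \<alpha> ` V" using e ends_subset relabel_ends_image by auto
  have "card (\<alpha> ` ends e) = card (ends e)"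
    using card_image[OF inj_on_subset[OF inj_\<alpha> ends_subset[OF e(1)]]] .
  then show "card (ends' e') = 2" using e loopless relabel_ends_image
    by (simp add: loopless_multigraph_def)
next
  have "inj_on (\<lambda>e. \<alpha> ` ends e) E"
    using assms inj_on_image_eq_iff[OF inj_\<alpha> ends_subset ends_subset]
    by (auto simp: simple_graph_def inj_on_def)
  then show "inj_on ends' (\<beta> ` E)"
    by (auto simp: inj_on_def relabel_ends_image)
qed

lemma connected_graph_relabel:
  assumes "connected_graph V E ends"
  shows "connected_graph (\<alpha> ` V) (\<beta> ` E) ends'"
proof -
  have adj: "(\<alpha> x, \<alpha> y) \<in> (adj_rel (\<beta> ` E) ends')\<^sup>*" if "(x, y) \<in> (adj_rel E ends)\<^sup>*" for x y
    using that
  proof (induction rule: rtrancl_induct)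
    case (step y z)
    then obtain e where e: "e \<in> E" "ends e = {y, z}" by (auto simp: adj_rel_def)
    then have "ends' (\<beta> e) = {\<alpha> y, \<alpha> z}" by (simp add: relabel_ends_image)
    then have "(\<alpha> y, \<alpha> z) \<in> adj_rel (\<beta> ` E) ends'"
      unfolding adj_rel_def using e(1) by blast
    with step.IH show ?case by (rule rtrancl_into_rtrancl)
  qed simp
  from assms obtain u where u: "u \<in> V" by (auto simp: connected_graph_def)
  show ?thesis
  proof (rule connected_graphI)
    show "\<alpha> u \<in> \<alpha> ` V" using u by simp
    fix x' assume "x' \<in> \<alpha> ` V"
    then obtain x where "x \<in> V" "x' = \<alpha> x" by blast
    then show "(\<alpha> u, x') \<in> (adj_rel (\<beta> ` E) ends')\<^sup>*"
      using assms u adj by (simp add: connected_graph_def)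
  qed
qed

lemma regular_relabel:
  assumes "regular k V E ends"
  shows "regular k (\<alpha> ` V) (\<beta> ` E) ends'"
  using assms bij_betw_same_card[OF bij_betw_incident_relabel]
  by (auto simp: regular_def incident_edges_relabel)

lemma edge_colorable_relabel:
  assumes "edge_colorable k V E ends"
  shows "edge_colorable k (\<alpha> ` V) (\<beta> ` E) ends'"
proof -
  obtain c where c: "\<forall>e\<in>E. c e < k" "\<forall>v\<in>V. inj_on c (incident_edges E ends v)"
    using assms by (auto simp: edge_colorable_def)
  have inv: "inv_into E \<beta> (\<beta> e) = e" if "e \<in> E" for e using inj_\<beta> that by simp
  show ?thesis
    unfolding edge_colorable_def
  proof (intro exI conjI ballI)
    fix e' assume "e' \<in> \<beta> ` E"
    then show "(c \<circ> inv_into E \<beta>) e' < k" using c(1) inv by auto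
  next
    fix v' assume "v' \<in> \<alpha> ` V"
    then obtain v where v: "v \<in> V" "v' = \<alpha> v" by blast
    have "inj_on (c \<circ> inv_into E \<beta>) (\<beta> ` incident_edges E ends v)"
    proof (rule inj_onI)
      fix x y assume "x \<in> \<beta> ` incident_edges E ends v" "y \<in> \<beta> ` incident_edges E ends v"
        and "(c \<circ> inv_into E \<beta>) x = (c \<circ> inv_into E \<beta>) y"
      then show "x = y"
        using c(2) v(1) inv_into_relabel_edge unfolding inj_on_def by force
    qed
    then show "inj_on (c \<circ> inv_into E \<beta>) (incident_edges (\<beta> ` E) ends' v')"
      using v by (simp add: incident_edges_relabel)
  qed
qed

lemma covering_projection_relabel:
  assumes "covering_projection V E ends VH EH endsH fV fE"
  shows "covering_projection (\<alpha> ` V) (\<beta> ` E) ends' VH EH endsH (fV \<circ> inv_into V \<alpha>) (fE \<circ> inv_into E \<beta>)"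
  unfolding covering_projection_def
proof (intro conjI ballI)
  fix v' assume "v' \<in> \<alpha> ` V"
  then obtain v where v: "v \<in> V" "v' = \<alpha> v" by auto
  show "(fV \<circ> inv_into V \<alpha>) v' \<in> VH"
    using assms v inj_\<alpha> by (simp add: covering_projection_def)
  have "bij_betw fE (incident_edges E ends v) (incident_edges EH endsH (fV v))"
    using assms v by (simp add: covering_projection_def)
  moreover have "bij_betw (fE \<circ> inv_into E \<beta> \<circ> \<beta>) (incident_edges E ends v) X \<longleftrightarrow>
      bij_betw fE (incident_edges E ends v) X" for X
    using inv_into_relabel_edge by (intro bij_betw_cong) simp
  ultimately have "bij_betw (fE \<circ> inv_into E \<beta>) (\<beta> ` incident_edges E ends v)
      (incident_edges EH endsH (fV v))"
    by (simp only: bij_betw_comp_iff[OF bij_betw_incident_relabel])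
  then show "bij_betw (fE \<circ> inv_into E \<beta>) (incident_edges (\<beta> ` E) ends' v')
      (incident_edges EH endsH ((fV \<circ> inv_into V \<alpha>) v'))"
    using v inj_\<alpha> by (simp add: incident_edges_relabel)
next
  fix e' assume "e' \<in> \<beta> ` E"
  then obtain e where e: "e \<in> E" "e' = \<beta> e" by blast
  show "(fE \<circ> inv_into E \<beta>) e' \<in> EH"
    using assms e inj_\<beta> by (simp add: covering_projection_def)
  have "(fV \<circ> inv_into V \<alpha>) ` \<alpha> ` ends e = fV ` ends e"
    unfolding image_image using inj_\<alpha> ends_subset[OF e(1)] by (intro image_cong) auto
  then show "endsH ((fE \<circ> inv_into E \<beta>) e') = (fV \<circ> inv_into V \<alpha>) ` ends' e'"
    using assms e inj_\<beta> relabel_ends_image by (simp add: covering_projection_def)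
qed

lemma local_bijections_lift_relabel:
  assumes lift: "local_bijections_lift V E ends VH EH endsH u" and u: "u \<in> V"
  shows "local_bijections_lift (\<alpha> ` V) (\<beta> ` E) ends' VH EH endsH (\<alpha> u)"
  unfolding local_bijections_lift_def
proof (intro ballI allI impI)
  fix x \<sigma>' assume x: "x \<in> VH"
    and \<sigma>': "bij_betw \<sigma>' (incident_edges (\<beta> ` E) ends' (\<alpha> u)) (incident_edges EH endsH x)"
  then have "bij_betw (\<sigma>' \<circ> \<beta>) (incident_edges E ends u) (incident_edges EH endsH x)"
    using bij_betw_trans[OF bij_betw_incident_relabel] by (simp add: incident_edges_relabel[OF u])
  then obtain fV fE where f: "covering_projection V E ends VH EH endsH fV fE" "fV u = x"
      "\<forall>e\<in>incident_edges E ends u. fE e = \<sigma>' (\<beta> e)"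
    using lift x unfolding local_bijections_lift_def by fastforce
  show "\<exists>fV fE. covering_projection (\<alpha> ` V) (\<beta> ` E) ends' VH EH endsH fV fE \<and> fV (\<alpha> u) = x \<and>
      (\<forall>e\<in>incident_edges (\<beta> ` E) ends' (\<alpha> u). fE e = \<sigma>' e)"
  proof (intro exI conjI)
    show "covering_projection (\<alpha> ` V) (\<beta> ` E) ends' VH EH endsH (fV \<circ> inv_into V \<alpha>) (fE \<circ> inv_into E \<beta>)"
      using f(1) by (rule covering_projection_relabel)
    show "(fV \<circ> inv_into V \<alpha>) (\<alpha> u) = x" using f(2) inj_\<alpha> u by simp
    show "\<forall>e'\<in>incident_edges (\<beta> ` E) ends' (\<alpha> u). (fE \<circ> inv_into E \<beta>) e' = \<sigma>' e'"
    proof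
      fix e' assume "e' \<in> incident_edges (\<beta> ` E) ends' (\<alpha> u)"
      then obtain e where "e \<in> incident_edges E ends u" "e' = \<beta> e"
        by (auto simp: incident_edges_relabel[OF u])
      then show "(fE \<circ> inv_into E \<beta>) e' = \<sigma>' e'"
        using f(3) inv_into_relabel_edge by simp
    qed
  qed
qed

end

definition toggle :: "'a \<Rightarrow> 'a set \<Rightarrow> 'a set" where
  "toggle i b = (if i \<in> b then b - {i} else insert i b)"

lemma toggle_toggle [simp]: "toggle i (toggle i b) = b"
  by (auto simp: toggle_def)

lemma toggle_neq: "toggle i b \<noteq> b"
  by (auto simp: toggle_def)

lemma toggle_inj: "toggle i b = toggle j b \<Longrightarrow> i = j"
  by (auto simp: toggle_def split: if_splits)

type_synonym 'v cover_state = "nat set \<times> ((nat \<Rightarrow> nat) \<times> 'v \<Rightarrow> 'v)"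

locale regular_edge_colouring =
  fixes k :: nat and V :: "'v set" and E :: "'e set" and ends :: "'e \<Rightarrow> 'v set"
    and c :: "'e \<Rightarrow> nat"
  assumes loopless: "loopless_multigraph V E ends"
    and regular: "regular k V E ends"
    and colour_less: "e \<in> E \<Longrightarrow> c e < k"
    and colour_inj: "v \<in> V \<Longrightarrow> inj_on c (incident_edges E ends v)"
begin

abbreviation "inc v \<equiv> incident_edges E ends v"

(* States are pairs; splitting them into components only obstructs the automation below. *)
declare split_paired_All [simp del] split_paired_Ex [simp del]

lemma bij_betw_colour: assumes "v \<in> V" shows "bij_betw c (inc v) {0..<k}"
proof -
  have "finite E" using loopless by (simp add: loopless_multigraph_def)
  then have "finite (inc v)" using incident_edges_subset by (rule finite_subset[rotated])
  moreover have "c ` inc v \<subseteq> {0..<k}" using colour_less by (auto simp: incident_edges_def)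
  moreover have "card (inc v) = k" using regular assms by (simp add: regular_def)
  ultimately show ?thesis
    using colour_inj[OF assms] by (simp add: bij_betw_def card_image card_subset_eq)
qed

definition colour_edge :: "'v \<Rightarrow> nat \<Rightarrow> 'e" where
  "colour_edge v = inv_into (inc v) c"

lemma bij_betw_colour_edge: "v \<in> V \<Longrightarrow> bij_betw (colour_edge v) {0..<k} (inc v)"
  unfolding colour_edge_def by (rule bij_betw_inv_into[OF bij_betw_colour])

lemma colour_edge_incident: "v \<in> V \<Longrightarrow> j < k \<Longrightarrow> colour_edge v j \<in> inc v"
  using bij_betwE[OF bij_betw_colour_edge] by simp

lemma colour_of_colour_edge: "v \<in> V \<Longrightarrow> j < k \<Longrightarrow> c (colour_edge v j) = j"
  unfolding colour_edge_def using bij_betw_colour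
  by (simp add: bij_betw_def f_inv_into_f)

lemma colour_edge_of_colour: "v \<in> V \<Longrightarrow> e \<in> inc v \<Longrightarrow> colour_edge v (c e) = e"
  unfolding colour_edge_def using colour_inj by (simp add: inv_into_f_f)

definition neighbour :: "nat \<Rightarrow> 'v \<Rightarrow> 'v" where
  "neighbour j v = (THE w. w \<noteq> v \<and> ends (colour_edge v j) = {v, w})"

lemma neighbour:
  assumes "v \<in> V" "j < k"
  shows "ends (colour_edge v j) = {v, neighbour j v}" "neighbour j v \<noteq> v" "neighbour j v \<in> V"
proof -
  have e: "colour_edge v j \<in> E" "v \<in> ends (colour_edge v j)"
    using colour_edge_incident[OF assms] by (auto simp: incident_edges_def)
  then have "card (ends (colour_edge v j)) = 2" and sub: "ends (colour_edge v j) \<subseteq> V"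
    using loopless by (auto simp: loopless_multigraph_def)
  then obtain w where "w \<noteq> v" "ends (colour_edge v j) = {v, w}"
    using e(2) by (fastforce simp: card_2_iff doubleton_eq_iff)
  then have "\<exists>!w. w \<noteq> v \<and> ends (colour_edge v j) = {v, w}"
    by (auto simp: doubleton_eq_iff)
  then have "neighbour j v \<noteq> v \<and> ends (colour_edge v j) = {v, neighbour j v}"
    unfolding neighbour_def by (rule theI')
  then show "ends (colour_edge v j) = {v, neighbour j v}" "neighbour j v \<noteq> v" "neighbour j v \<in> V"
    using sub by auto
qed

lemma colour_edge_neighbour:
  assumes "v \<in> V" "j < k"
  shows "colour_edge (neighbour j v) j = colour_edge v j"
proof -
  have "colour_edge v j \<in> inc (neighbour j v)"
    using colour_edge_incident[OF assms] neighbour(1)[OF assms] by (auto simp: incident_edges_def)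
  then show ?thesis
    using colour_edge_of_colour[OF neighbour(3)[OF assms]] colour_of_colour_edge[OF assms] by metis
qed

lemma neighbour_neighbour:
  assumes "v \<in> V" "j < k"
  shows "neighbour j (neighbour j v) = v"
proof -
  let ?w = "neighbour j v"
  have "{?w, neighbour j ?w} = ends (colour_edge v j)"
    using neighbour(1)[OF neighbour(3)[OF assms] assms(2)] colour_edge_neighbour[OF assms] by simp
  also have "\<dots> = {v, ?w}" by (rule neighbour(1)[OF assms])
  finally show ?thesis
    using neighbour(2)[OF neighbour(3)[OF assms] assms(2)] by (auto simp: doubleton_eq_iff)
qed

definition frames :: "((nat \<Rightarrow> nat) \<times> 'v) set" where
  "frames = {\<rho>. \<rho> permutes {0..<k}} \<times> V"

definition states :: "'v cover_state set" where
  "states = Pow {0..<k} \<times> (frames \<rightarrow>\<^sub>E V)"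

definition move :: "nat \<Rightarrow> 'v cover_state \<Rightarrow> 'v cover_state" where
  "move i s = (toggle i (fst s), restrict (\<lambda>p. neighbour (fst p i) (snd s p)) frames)"

definition base :: "'v cover_state" where
  "base = ({}, restrict snd frames)"

inductive_set cover_vertices :: "'v cover_state set" where
  base: "base \<in> cover_vertices"
| move: "s \<in> cover_vertices \<Longrightarrow> i < k \<Longrightarrow> move i s \<in> cover_vertices"

definition cover_edges :: "(nat \<times> 'v cover_state set) set" where
  "cover_edges = {(i, {s, move i s}) | s i. s \<in> cover_vertices \<and> i < k}"

lemma frame_colour_less: "p \<in> frames \<Longrightarrow> i < k \<Longrightarrow> fst p i < k"
  unfolding frames_def using permutes_in_image by fastforce

lemma finite_states: "finite states"
proof -
  have "finite V" using loopless by (simp add: loopless_multigraph_def)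
  then have "finite frames" by (simp add: frames_def finite_permutations)
  then show ?thesis using \<open>finite V\<close> by (simp add: states_def finite_PiE)
qed

lemma state_vertex: "s \<in> states \<Longrightarrow> p \<in> frames \<Longrightarrow> snd s p \<in> V"
  unfolding states_def by (auto simp: PiE_iff)

lemma snd_move: "p \<in> frames \<Longrightarrow> snd (move i s) p = neighbour (fst p i) (snd s p)"
  by (simp add: move_def)

lemma move_states:
  assumes "s \<in> states" "i < k"
  shows "move i s \<in> states"
proof -
  have "toggle i (fst s) \<subseteq> {0..<k}"
    using assms by (auto simp: states_def toggle_def)
  moreover have "neighbour (fst p i) (snd s p) \<in> V" if "p \<in> frames" for p
    using neighbour(3)[OF state_vertex[OF assms(1) that] frame_colour_less[OF that assms(2)]] .
  ultimately show ?thesis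
    by (simp add: states_def move_def)
qed

lemma move_move:
  assumes "s \<in> states" "i < k"
  shows "move i (move i s) = s"
proof -
  have "snd (move i (move i s)) p = snd s p" for p
  proof (cases "p \<in> frames")
    case True
    then show ?thesis
      using neighbour_neighbour[OF state_vertex[OF assms(1) True] frame_colour_less[OF True assms(2)]]
      by (simp only: snd_move)
  next
    case False
    have "snd s \<in> frames \<rightarrow>\<^sub>E V" using assms(1) by (simp add: states_def mem_Times_iff)
    then show ?thesis using False by (simp add: move_def PiE_arb[OF _ False])
  qed
  then have "snd (move i (move i s)) = snd s" by (rule ext)
  moreover have "fst (move i (move i s)) = fst s" by (simp add: move_def)
  ultimately show ?thesis by (simp add: prod_eq_iff)
qed

lemma move_neq: "move i s \<noteq> s"
  by (simp add: move_def prod_eq_iff toggle_neq)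

lemma move_inj: "move i s = move j s \<Longrightarrow> i = j"
  by (auto simp: move_def prod_eq_iff dest: toggle_inj)

lemma cover_vertices_states: "s \<in> cover_vertices \<Longrightarrow> s \<in> states"
proof (induction rule: cover_vertices.induct)
  case base
  show ?case by (auto simp: base_def states_def frames_def)
qed (rule move_states)

lemma move_move_cover: "s \<in> cover_vertices \<Longrightarrow> i < k \<Longrightarrow> move i (move i s) = s"
  by (simp add: cover_vertices_states move_move)

lemma finite_cover_vertices: "finite cover_vertices"
  using finite_states cover_vertices_states by (blast intro: finite_subset)

lemma cover_edge_cases:
  assumes "e \<in> cover_edges"
  obtains s i where "e = (i, {s, move i s})" "s \<in> cover_vertices" "i < k"
  using assms by (auto simp: cover_edges_def)

lemma cover_edge: "s \<in> cover_vertices \<Longrightarrow> i < k \<Longrightarrow> (i, {s, move i s}) \<in> cover_edges"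
  by (auto simp: cover_edges_def)

lemma bij_betw_cover_incident:
  assumes s: "s \<in> cover_vertices"
  shows "bij_betw (\<lambda>i. (i, {s, move i s})) {0..<k} (incident_edges cover_edges snd s)"
proof (rule bij_betw_imageI)
  show "inj_on (\<lambda>i. (i, {s, move i s})) {0..<k}" by (simp add: inj_on_def)
  show "(\<lambda>i. (i, {s, move i s})) ` {0..<k} = incident_edges cover_edges snd s"
  proof (intro equalityI subsetI)
    fix e assume "e \<in> incident_edges cover_edges snd s"
    then obtain t i where e: "e = (i, {t, move i t})" "t \<in> cover_vertices" "i < k"
        and "s \<in> {t, move i t}"
      by (auto simp: incident_edges_def elim: cover_edge_cases)
    then have "{t, move i t} = {s, move i s}"
      using move_move_cover[OF e(2,3)] by auto
    then show "e \<in> (\<lambda>i. (i, {s, move i s})) ` {0..<k}" using e by auto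
  qed (use cover_edge[OF s] in \<open>auto simp: incident_edges_def\<close>)
qed

lemma simple_graph_cover: "simple_graph cover_vertices cover_edges snd"
  unfolding simple_graph_def loopless_multigraph_def
proof (intro conjI ballI)
  show "finite cover_vertices" by (rule finite_cover_vertices)
  have "cover_edges = (\<lambda>(s, i). (i, {s, move i s})) ` (cover_vertices \<times> {0..<k})"
    by (auto simp: cover_edges_def)
  then show "finite cover_edges" using finite_cover_vertices by simp
next
  fix e assume "e \<in> cover_edges"
  then obtain s i where "e = (i, {s, move i s})" "s \<in> cover_vertices" "i < k"
    by (rule cover_edge_cases)
  then show "snd e \<subseteq> cover_vertices" "card (snd e) = 2"
    using move_neq[of i s] by (auto intro: cover_vertices.move)
next
  show "inj_on snd cover_edges"
  proof (rule inj_onI)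
    fix e1 e2 assume "e1 \<in> cover_edges" "e2 \<in> cover_edges" and ends: "snd e1 = snd e2"
    then obtain s i t j where e: "e1 = (i, {s, move i s})" "e2 = (j, {t, move j t})"
      "s \<in> cover_vertices" "i < k" "j < k" and st: "{s, move i s} = {t, move j t}"
      by (auto elim!: cover_edge_cases)
    have "i = j"
    proof (cases "s = t")
      case True
      then have "move i s = move j s" using st move_neq[of i s] by (auto simp: doubleton_eq_iff)
      then show ?thesis by (rule move_inj)
    next
      case False
      then have t: "t = move i s" and s: "s = move j t" using st by (auto simp: doubleton_eq_iff)
      have "move i t = s" unfolding t by (rule move_move_cover[OF e(3,4)])
      then show ?thesis using s by (intro move_inj[of i t j]) simp
    qed
    then show "e1 = e2" using e st by simp
  qed
qed

lemma regular_cover: "regular k cover_vertices cover_edges snd"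
  unfolding regular_def using bij_betw_same_card[OF bij_betw_cover_incident] by simp

lemma edge_colorable_cover: "edge_colorable k cover_vertices cover_edges snd"
  unfolding edge_colorable_def
proof (intro exI[of _ fst] conjI ballI)
  fix e assume "e \<in> cover_edges"
  then show "fst e < k" by (rule cover_edge_cases) simp
next
  fix s assume "s \<in> cover_vertices"
  then have "incident_edges cover_edges snd s = (\<lambda>i. (i, {s, move i s})) ` {0..<k}"
    using bij_betw_cover_incident by (simp add: bij_betw_def)
  then show "inj_on fst (incident_edges cover_edges snd s)"
    by (simp add: inj_on_def)
qed

lemma connected_graph_cover: "connected_graph cover_vertices cover_edges snd"
proof (rule connected_graphI[OF cover_vertices.base])
  fix s assume "s \<in> cover_vertices"
  then show "(base, s) \<in> (adj_rel cover_edges snd)\<^sup>*"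
  proof (induction rule: cover_vertices.induct)
    case (move s i)
    have "(s, move i s) \<in> adj_rel cover_edges snd"
      using cover_edge[OF move.hyps] unfolding adj_rel_def by force
    with move.IH show ?case by (rule rtrancl_into_rtrancl)
  qed simp
qed

definition project :: "(nat \<Rightarrow> nat) \<Rightarrow> 'v \<Rightarrow> 'v cover_state \<Rightarrow> 'v" where
  "project \<rho> x s = snd s (\<rho>, x)"

text \<open>Both ends of an edge give the same value here, by \<open>colour_edge_neighbour\<close>.\<close>
definition project_edge :: "(nat \<Rightarrow> nat) \<Rightarrow> 'v \<Rightarrow> nat \<times> 'v cover_state set \<Rightarrow> 'e" where
  "project_edge \<rho> x e = colour_edge (project \<rho> x (SOME s. s \<in> snd e)) (\<rho> (fst e))"

context
  fixes \<rho> x assumes \<rho>: "\<rho> permutes {0..<k}" and x: "x \<in> V"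
begin

lemma frame_mem: "(\<rho>, x) \<in> frames"
  using \<rho> x by (simp add: frames_def)

lemma project_base: "project \<rho> x base = x"
  using frame_mem by (simp add: project_def base_def)

lemma project_vertex: "s \<in> cover_vertices \<Longrightarrow> project \<rho> x s \<in> V"
  unfolding project_def using state_vertex[OF cover_vertices_states frame_mem] .

lemma project_move: "project \<rho> x (move i s) = neighbour (\<rho> i) (project \<rho> x s)"
  unfolding project_def using snd_move[OF frame_mem] by simp

lemma permuted_colour_less: "i < k \<Longrightarrow> \<rho> i < k"
  using permutes_in_image[OF \<rho>] by simp

lemma project_edge_eq:
  assumes s: "s \<in> cover_vertices" and i: "i < k"
  shows "project_edge \<rho> x (i, {s, move i s}) = colour_edge (project \<rho> x s) (\<rho> i)"
proof -
  have "(SOME t. t \<in> {s, move i s}) \<in> {s, move i s}" by (rule someI[of _ s]) simp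
  then show ?thesis
    using colour_edge_neighbour[OF project_vertex[OF s] permuted_colour_less[OF i]]
    by (auto simp: project_edge_def project_move)
qed

lemma covering_projection_cover:
  "covering_projection cover_vertices cover_edges snd V E ends (project \<rho> x) (project_edge \<rho> x)"
  unfolding covering_projection_def
proof (intro conjI ballI)
  fix s assume "s \<in> cover_vertices"
  then show "project \<rho> x s \<in> V" by (rule project_vertex)
next
  fix e assume "e \<in> cover_edges"
  then obtain s i where e: "e = (i, {s, move i s})" "s \<in> cover_vertices" "i < k"
    by (rule cover_edge_cases)
  have v: "project \<rho> x s \<in> V" and j: "\<rho> i < k"
    using project_vertex[OF e(2)] permuted_colour_less[OF e(3)] .
  show "project_edge \<rho> x e \<in> E"
    using colour_edge_incident[OF v j] e project_edge_eq by (simp add: incident_edges_def)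
  show "ends (project_edge \<rho> x e) = project \<rho> x ` snd e"
    using neighbour(1)[OF v j] e project_edge_eq by (simp add: project_move)
next
  fix s assume s: "s \<in> cover_vertices"
  have "bij_betw (colour_edge (project \<rho> x s) \<circ> \<rho>) {0..<k} (inc (project \<rho> x s))"
    using permutes_imp_bij[OF \<rho>] bij_betw_colour_edge[OF project_vertex[OF s]]
    by (rule bij_betw_trans)
  moreover have "bij_betw (project_edge \<rho> x \<circ> (\<lambda>i. (i, {s, move i s}))) {0..<k} X \<longleftrightarrow>
      bij_betw (colour_edge (project \<rho> x s) \<circ> \<rho>) {0..<k} X" for X
    using project_edge_eq[OF s] by (intro bij_betw_cong) simp
  ultimately show "bij_betw (project_edge \<rho> x) (incident_edges cover_edges snd s)
      (inc (project \<rho> x s))"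
    by (simp add: bij_betw_comp_iff[OF bij_betw_cover_incident[OF s]])
qed

end

lemma local_bijections_lift_cover: "local_bijections_lift cover_vertices cover_edges snd V E ends base"
  unfolding local_bijections_lift_def
proof (intro ballI allI impI)
  fix x \<sigma> assume x: "x \<in> V"
    and \<sigma>: "bij_betw \<sigma> (incident_edges cover_edges snd base) (inc x)"
  define g where "g i = (i, {base, move i base})" for i
  define \<rho> where "\<rho> i = (if i < k then c (\<sigma> (g i)) else i)" for i
  have g: "bij_betw g {0..<k} (incident_edges cover_edges snd base)"
    unfolding g_def by (rule bij_betw_cover_incident[OF cover_vertices.base])
  have "bij_betw (c \<circ> (\<sigma> \<circ> g)) {0..<k} {0..<k}"
    using bij_betw_trans[OF bij_betw_trans[OF g \<sigma>] bij_betw_colour[OF x]] .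
  moreover have "bij_betw \<rho> {0..<k} X \<longleftrightarrow> bij_betw (c \<circ> (\<sigma> \<circ> g)) {0..<k} X" for X
    by (intro bij_betw_cong) (simp add: \<rho>_def)
  ultimately have "bij_betw \<rho> {0..<k} {0..<k}" by simp
  then have \<rho>: "\<rho> permutes {0..<k}"
    by (rule bij_imp_permutes) (simp add: \<rho>_def)
  have agree: "project_edge \<rho> x e = \<sigma> e" if "e \<in> incident_edges cover_edges snd base" for e
  proof -
    have "e \<in> g ` {0..<k}" using that bij_betw_imp_surj_on[OF g] by simp
    then obtain i where i: "i < k" "e = g i" by auto
    have "\<sigma> e \<in> inc x" using bij_betwE[OF \<sigma>] that by blast
    then show ?thesis
      using project_edge_eq[OF \<rho> x cover_vertices.base i(1)] colour_edge_of_colour[OF x]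
      by (simp add: i g_def[symmetric] project_base[OF \<rho> x] \<rho>_def)
  qed
  show "\<exists>fV fE. covering_projection cover_vertices cover_edges snd V E ends fV fE \<and>
      fV base = x \<and> (\<forall>e\<in>incident_edges cover_edges snd base. fE e = \<sigma> e)"
  proof (intro exI conjI ballI)
    show "covering_projection cover_vertices cover_edges snd V E ends (project \<rho> x) (project_edge \<rho> x)"
      by (rule covering_projection_cover[OF \<rho> x])
  qed (simp_all add: project_base[OF \<rho> x] agree)
qed

end

theorem mainTheorem5:
  fixes k :: nat and VH :: "'v set" and EH :: "'e set" and endsH :: "'e \<Rightarrow> 'v set"
  assumes "k \<ge> 1"
    and "loopless_multigraph VH EH endsH"
    and "connected_graph VH EH endsH"
    and "regular k VH EH endsH"
    and "edge_colorable k VH EH endsH"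
  shows "\<exists>(VG :: nat set) (EG :: nat set) (endsG :: nat \<Rightarrow> nat set) u.
           simple_graph VG EG endsG \<and> connected_graph VG EG endsG \<and>
           regular k VG EG endsG \<and> edge_colorable k VG EG endsG \<and> u \<in> VG \<and>
           (\<forall>x\<in>VH. \<forall>\<sigma>. bij_betw \<sigma> (incident_edges EG endsG u) (incident_edges EH endsH x) \<longrightarrow>
              (\<exists>fV fE. covering_projection VG EG endsG VH EH endsH fV fE \<and> fV u = x \<and>
                 (\<forall>e\<in>incident_edges EG endsG u. fE e = \<sigma> e)))"
proof -
  obtain c where "\<forall>e\<in>EH. c e < k" "\<forall>v\<in>VH. inj_on c (incident_edges EH endsH v)"
    using assms(5) by (auto simp: edge_colorable_def)
  then interpret regular_edge_colouring k VH EH endsH c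
    using assms(2,4) by unfold_locales auto
  have loopless_cover: "loopless_multigraph cover_vertices cover_edges snd"
    using simple_graph_cover by (simp add: simple_graph_def)
  obtain \<alpha> :: "_ \<Rightarrow> nat" where \<alpha>: "inj_on \<alpha> cover_vertices"
    using finite_imp_inj_to_nat_seg[OF finite_cover_vertices] by blast
  have "finite cover_edges" using loopless_cover by (simp add: loopless_multigraph_def)
  then obtain \<beta> :: "_ \<Rightarrow> nat" where \<beta>: "inj_on \<beta> cover_edges"
    using finite_imp_inj_to_nat_seg by blast
  note relabel = loopless_cover \<alpha> \<beta>
  let ?endsG = "relabel_ends \<alpha> \<beta> cover_edges snd"
  show ?thesis
  proof (intro exI conjI)
    show "simple_graph (\<alpha> ` cover_vertices) (\<beta> ` cover_edges) ?endsG"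
      by (rule simple_graph_relabel[OF relabel simple_graph_cover])
    show "connected_graph (\<alpha> ` cover_vertices) (\<beta> ` cover_edges) ?endsG"
      by (rule connected_graph_relabel[OF relabel connected_graph_cover])
    show "regular k (\<alpha> ` cover_vertices) (\<beta> ` cover_edges) ?endsG"
      by (rule regular_relabel[OF relabel regular_cover])
    show "edge_colorable k (\<alpha> ` cover_vertices) (\<beta> ` cover_edges) ?endsG"
      by (rule edge_colorable_relabel[OF relabel edge_colorable_cover])
    show "\<alpha> base \<in> \<alpha> ` cover_vertices" using cover_vertices.base by simp
  qed (use local_bijections_lift_relabel[OF relabel local_bijections_lift_cover cover_vertices.base]
    in \<open>simp add: local_bijections_lift_def\<close>)
qed

end
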